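(* Let $\mu$ be a positive finite Borel measure on $[0,1)$ and let $v,w$ be weights on $\mathbb{D}$. Assume that $1/v\in L_1([0,1),\mu)$ and that $w(r)\le1-r$ for every $0<r<1$. Then $I_\mu:H^\infty_v\to H^0_w$ is (well defined and) compact.
   Context: $\mathbb{D}$ is the open unit disc and $H(\mathbb{D})$ the holomorphic functions on $\mathbb{D}$. A weight is a function $v:\mathbb{D}\to(0,\infty)$ that is radial ($v(z)=v(|z|)$), continuous, non-increasing in $|z|$, with $\lim_{r\to1^-}v(r)=0$. $H^\infty_v=\{f\in H(\mathbb{D}):\|f\|_v:=\sup_zv(z)|f(z)|<\infty\}$ and $H^0_w=\{f\in H^\infty_w:\lim_{|z|\to1^-}w(z)|f(z)|=0\}$. $I_\mu(f)(z)=\int_0^1\frac{f(t)}{1-tz}\,d\mu(t)$ whenever this defines a holomorphic function on $\mathbb{D}$. *)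

theory Defs
  imports "HOL-Analysis.Analysis"
begin

definition weight :: "(complex \<Rightarrow> real) \<Rightarrow> bool" where
  "weight v \<longleftrightarrow>
     (\<forall>z\<in>ball 0 1. v z > 0) \<and>
     (\<forall>z\<in>ball 0 1. v z = v (complex_of_real (norm z))) \<and>
     continuous_on (ball 0 1) v \<and>
     (\<forall>z\<in>ball 0 1. \<forall>z'\<in>ball 0 1. norm z \<le> norm z' \<longrightarrow> v z' \<le> v z) \<and>
     ((\<lambda>r. v (complex_of_real r)) \<longlongrightarrow> 0) (at_left 1)"

text \<open>Weighted sup-norm \<open>\<parallel>f\<parallel>_v\<close> (meaningful for \<open>f \<in> Hinf v\<close>).\<close>
definition wnorm :: "(complex \<Rightarrow> real) \<Rightarrow> (complex \<Rightarrow> complex) \<Rightarrow> real" where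
  "wnorm v f = (SUP z\<in>ball 0 1. v z * norm (f z))"

definition Hinf :: "(complex \<Rightarrow> real) \<Rightarrow> (complex \<Rightarrow> complex) set" where
  "Hinf v = {f. f holomorphic_on ball 0 1 \<and> (\<exists>C. \<forall>z\<in>ball 0 1. v z * norm (f z) \<le> C)}"

definition H0 :: "(complex \<Rightarrow> real) \<Rightarrow> (complex \<Rightarrow> complex) set" where
  "H0 w = {f \<in> Hinf w. \<forall>e>0. \<exists>r<1. \<forall>z\<in>ball 0 1. r < norm z \<longrightarrow> w z * norm (f z) < e}"

text \<open>The operator \<open>I_\<mu>\<close>; \<open>M\<close> is a measure on \<open>[0,1)\<close>.\<close>
definition I_mu :: "real measure \<Rightarrow> (complex \<Rightarrow> complex) \<Rightarrow> complex \<Rightarrow> complex" where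
  "I_mu M f z = (LINT t|M. f (complex_of_real t) / (1 - complex_of_real t * z))"

definition I_mu_well_defined ::
  "real measure \<Rightarrow> (complex \<Rightarrow> real) \<Rightarrow> (complex \<Rightarrow> real) \<Rightarrow> bool" where
  "I_mu_well_defined M v w \<longleftrightarrow>
     (\<forall>f\<in>Hinf v. (\<forall>z\<in>ball 0 1.
          integrable M (\<lambda>t. f (complex_of_real t) / (1 - complex_of_real t * z)))
        \<and> I_mu M f \<in> H0 w)"

text \<open>Compactness (sequential form): every \<open>\<parallel>\<cdot>\<parallel>_v\<close>-bounded sequence in \<open>H^\<infinity>_v\<close> has
  a subsequence whose images converge in \<open>(H^0_w, \<parallel>\<cdot>\<parallel>_w)\<close>.\<close>
definition I_mu_compact ::
  "real measure \<Rightarrow> (complex \<Rightarrow> real) \<Rightarrow> (complex \<Rightarrow> real) \<Rightarrow> bool" where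
  "I_mu_compact M v w \<longleftrightarrow>
     (\<forall>fs :: nat \<Rightarrow> complex \<Rightarrow> complex. (\<forall>n. fs n \<in> Hinf v) \<and> (\<exists>C. \<forall>n. wnorm v (fs n) \<le> C) \<longrightarrow>
        (\<exists>r g. strict_mono r \<and> g \<in> H0 w \<and>
           (\<lambda>n. wnorm w (\<lambda>z. I_mu M (fs (r n)) z - g z)) \<longlonglongrightarrow> 0))"

end

theory Submission
  imports Defs "HOL-Complex_Analysis.Great_Picard"
begin

(* For 0 <= t < 1 and |z| < 1 we have |1 - t z| >= 1 - t |z| >= 1 - |z|. Hence every h in L1(mu)
   has a transform I h (z) = \<integral> h(t) / (1 - t z) d mu, which is holomorphic on the disc (by
   differentiating under the integral) and satisfies

     (1 - |z|) |I h (z)| <= \<integral> |h(t)| (1 - |z|) / (1 - t |z|) d mu <= ||h||_1 ;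

   the middle term tends to 0 as |z| -> 1 by dominated convergence. If f is in H^inf_v then
   |f(t)| <= ||f||_v / v(t), so 1/v in L1(mu) puts f on [0,1) into L1(mu). Since w(z) <= 1 - |z|
   (at z = 0 by continuity), the estimates give I f in H^0_w and ||I f||_w <= ||f||_1.
   Compactness: by Montel a ||.||_v-bounded sequence has a subsequence converging pointwise to
   some g with the same bound; dominated convergence with majorant 2C/v gives f_n -> g in
   L1(mu), hence I f_n -> I g in H^0_w. *)

section \<open>Weights and weighted sup-norms\<close>

lemma weight_pos: "weight v \<Longrightarrow> z \<in> ball 0 1 \<Longrightarrow> 0 < v z"
  unfolding weight_def by blast

lemma weight_radial: "weight v \<Longrightarrow> z \<in> ball 0 1 \<Longrightarrow> v z = v (complex_of_real (norm z))"
  unfolding weight_def by blast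

lemma weight_le_one_minus_norm:
  assumes w: "weight w" and le: "\<forall>r::real. 0 < r \<and> r < 1 \<longrightarrow> w (complex_of_real r) \<le> 1 - r"
    and z: "z \<in> ball 0 1"
  shows "w z \<le> 1 - norm z"
proof (cases "z = 0")
  case True
  have w_cont: "isCont w 0"
    using w continuous_on_eq_continuous_at[of "ball 0 1" w] by (simp add: weight_def)
  have w_lim: "((\<lambda>r. w (complex_of_real r)) \<longlongrightarrow> w (complex_of_real 0)) (at_right 0)"
    by (rule isCont_tendsto_compose[OF _ tendsto_of_real[OF tendsto_ident_at]]) (simp add: w_cont)
  have bound_lim: "((\<lambda>r. 1 - r) \<longlongrightarrow> 1 - 0) (at_right (0::real))"
    by (intro tendsto_intros)
  have "\<forall>\<^sub>F r in at_right 0. w (complex_of_real r) \<le> 1 - r"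
    by (rule eventually_mono[OF eventually_at_right_real[of 0 1]]) (use le in auto)
  from tendsto_le[OF trivial_limit_at_right_real bound_lim w_lim this] True
  show ?thesis by simp
next
  case False
  then have "w (complex_of_real (norm z)) \<le> 1 - norm z"
    using le z by simp
  with weight_radial[OF w z] show ?thesis by simp
qed

lemma norm_le_divide_weight:
  assumes "weight v" "z \<in> ball 0 1" "v z * norm (f z) \<le> C"
  shows "norm (f z) \<le> C / v z"
  using assms weight_pos[OF assms(1,2)] by (simp add: pos_le_divide_eq mult.commute)

lemma weight_bounded_below_on_compact:
  assumes v: "weight v" and K: "compact K" "K \<subseteq> ball 0 1"
  obtains c where "c > 0" "\<And>z. z \<in> K \<Longrightarrow> c \<le> v z"
proof (cases "K = {}")
  case True
  then show ?thesis using that[of 1] by simp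
next
  case False
  have "continuous_on K v"
    using v K(2) by (auto simp: weight_def intro: continuous_on_subset)
  then obtain x where "x \<in> K" "\<And>z. z \<in> K \<Longrightarrow> v x \<le> v z"
    using continuous_attains_inf[OF K(1) False] by blast
  with K(2) weight_pos[OF v] show ?thesis
    using that[of "v x"] by blast
qed

lemma wnorm_upper:
  assumes "f \<in> Hinf v" "z \<in> ball 0 1"
  shows "v z * norm (f z) \<le> wnorm v f"
proof -
  obtain C where "\<forall>z\<in>ball 0 1. v z * norm (f z) \<le> C"
    using assms(1) by (auto simp: Hinf_def)
  then have "bdd_above ((\<lambda>z. v z * norm (f z)) ` ball 0 1)"
    by (intro bdd_aboveI2) auto
  then show ?thesis
    unfolding wnorm_def by (rule cSUP_upper[OF assms(2)])
qed

lemma wnorm_least: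
  assumes "\<And>z. z \<in> ball 0 1 \<Longrightarrow> v z * norm (f z) \<le> C"
  shows "wnorm v f \<le> C"
  unfolding wnorm_def by (rule cSUP_least) (use assms in auto)

lemma wnorm_nonneg:
  assumes "weight v" "f \<in> Hinf v"
  shows "0 \<le> wnorm v f"
proof -
  have "0 \<le> v 0 * norm (f 0)"
    using weight_pos[OF assms(1), of 0] by simp
  also have "\<dots> \<le> wnorm v f"
    using wnorm_upper[OF assms(2), of 0] by simp
  finally show ?thesis .
qed

lemma weighted_norm_diff_le:
  assumes "weight v" "z \<in> ball 0 1"
  shows "v z * norm (f z - g z) \<le> v z * norm (f z) + v z * norm (g z)"
  using weight_pos[OF assms] norm_triangle_ineq4[of "f z" "g z"]
  by (simp add: distrib_left[symmetric])

lemma Hinf_diff: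
  assumes v: "weight v" and f: "f \<in> Hinf v" and g: "g \<in> Hinf v"
  shows "(\<lambda>z. f z - g z) \<in> Hinf v"
proof -
  have "v z * norm (f z - g z) \<le> wnorm v f + wnorm v g" if z: "z \<in> ball 0 1" for z
    using weighted_norm_diff_le[OF v z, of f g] wnorm_upper[OF f z] wnorm_upper[OF g z] by simp
  moreover have "(\<lambda>z. f z - g z) holomorphic_on ball 0 1"
    using f g by (auto simp: Hinf_def intro!: holomorphic_intros)
  ultimately show ?thesis
    unfolding Hinf_def by blast
qed

lemma weighted_bounded_seq_has_convergent_subseq:
  fixes fs :: "nat \<Rightarrow> complex \<Rightarrow> complex"
  assumes v: "weight v" and hol: "\<And>n. fs n holomorphic_on ball 0 1"
    and bound: "\<And>n z. z \<in> ball 0 1 \<Longrightarrow> v z * norm (fs n z) \<le> C"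
  obtains r g where "strict_mono r" "g \<in> Hinf v" "\<And>z. z \<in> ball 0 1 \<Longrightarrow> v z * norm (g z) \<le> C"
    "\<And>z. z \<in> ball 0 1 \<Longrightarrow> (\<lambda>n. fs (r n) z) \<longlonglongrightarrow> g z"
proof -
  have locally_bounded: "\<exists>B. \<forall>h\<in>range fs. \<forall>z\<in>K. norm (h z) \<le> B"
    if K: "compact K" "K \<subseteq> ball 0 1" for K
  proof -
    obtain c where c: "c > 0" "\<And>z. z \<in> K \<Longrightarrow> c \<le> v z"
      using weight_bounded_below_on_compact[OF v K] by blast
    have "norm (fs n z) \<le> max C 0 / c" if z: "z \<in> K" for n z
    proof -
      have "norm (fs n z) \<le> C / v z"
        using K z by (intro norm_le_divide_weight[OF v _ bound]) auto
      also have "\<dots> \<le> max C 0 / v z"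
        using K z weight_pos[OF v, of z] by (intro divide_right_mono) auto
      also have "\<dots> \<le> max C 0 / c"
        using c(1) c(2)[OF z] by (intro divide_left_mono) (auto intro: mult_pos_pos)
      finally show ?thesis .
    qed
    then show ?thesis by blast
  qed
  obtain g r where g: "g holomorphic_on ball 0 1" "strict_mono r"
    "\<And>z. z \<in> ball 0 1 \<Longrightarrow> (\<lambda>n. fs (r n) z) \<longlonglongrightarrow> g z"
  proof (rule Montel[OF open_ball _ locally_bounded order_refl])
    show "h holomorphic_on ball 0 1" if "h \<in> range fs" for h
      using hol that by auto
  qed (auto intro: that)
  have g_bound: "v z * norm (g z) \<le> C" if z: "z \<in> ball 0 1" for z
    by (rule LIMSEQ_le_const2[OF tendsto_mult_left[OF tendsto_norm[OF g(3)[OF z]]]])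
      (use bound z in auto)
  with g(1) have "g \<in> Hinf v"
    unfolding Hinf_def by blast
  with g g_bound show ?thesis
    using that by blast
qed

section \<open>The kernel 1/(1 - t z)\<close>

lemma one_minus_le_one_minus_mult:
  fixes s t :: real
  assumes "0 \<le> s" "0 \<le> t" "t \<le> 1"
  shows "1 - s \<le> 1 - t * s"
  using assms by (simp add: mult_left_le_one_le)

lemma damping_factor_bounds:
  fixes s t :: real
  assumes "0 \<le> s" "s < 1" "0 \<le> t" "t \<le> 1"
  shows "0 \<le> (1 - s) / (1 - t * s)" "(1 - s) / (1 - t * s) \<le> 1"
  using one_minus_le_one_minus_mult[of s t] assms by (auto simp: zero_le_divide_iff divide_le_eq_1)

lemma norm_one_minus_of_real_mult_ge:
  fixes t :: real and z :: complex
  assumes "0 \<le> t"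
  shows "1 - t * norm z \<le> norm (1 - complex_of_real t * z)"
  using norm_triangle_ineq2[of 1 "complex_of_real t * z"] assms by (simp add: norm_mult)

lemma norm_divide_one_minus_of_real_mult_le:
  fixes t :: real and c z :: complex
  assumes "0 \<le> t" "t \<le> 1" "norm z < 1"
  shows "norm (c / (1 - complex_of_real t * z)) \<le> norm c / (1 - t * norm z)"
proof -
  have "0 < 1 - t * norm z"
    using one_minus_le_one_minus_mult[of "norm z" t] assms by simp
  with norm_one_minus_of_real_mult_ge[OF assms(1), of z] show ?thesis
    by (simp add: norm_divide) (auto intro!: divide_left_mono mult_pos_pos)
qed

lemma one_minus_norm_le_norm_one_minus_of_real_mult:
  fixes t :: real and z :: complex
  assumes "0 \<le> t" "t \<le> 1"
  shows "1 - norm z \<le> norm (1 - complex_of_real t * z)"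
  using one_minus_le_one_minus_mult[of "norm z" t] norm_one_minus_of_real_mult_ge[of t z] assms
  by simp

lemma kernel_difference_quotient:
  fixes c t z0 z1 :: complex
  assumes "1 - t * z1 \<noteq> 0" "1 - t * z0 \<noteq> 0" "z1 \<noteq> z0"
  shows "(c / (1 - t * z1) - c / (1 - t * z0)) / (z1 - z0) - c * t / (1 - t * z0)^2
    = c * t^2 * (z1 - z0) / ((1 - t * z1) * (1 - t * z0)^2)"
proof -
  define A B where "A = 1 - t * z1" and "B = 1 - t * z0"
  have AB: "A \<noteq> 0" "B \<noteq> 0" "B - A = t * (z1 - z0)" "z1 - z0 \<noteq> 0"
    using assms by (auto simp: A_def B_def algebra_simps)
  have "c / A - c / B = c * (B - A) / (A * B)"
    using AB(1,2) by (simp add: field_simps)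
  then have "(c / A - c / B) / (z1 - z0) = c * t / (A * B)"
    using AB(4) by (simp add: AB(3))
  moreover have "c * t / (A * B) - c * t / B^2 = c * t * (B - A) / (A * B^2)"
    using AB(1,2) by (simp add: field_simps power2_eq_square)
  ultimately have "(c / A - c / B) / (z1 - z0) - c * t / B^2 = c * t^2 * (z1 - z0) / (A * B^2)"
    by (simp add: AB(3) power2_eq_square)
  then show ?thesis
    by (simp add: A_def B_def)
qed

section \<open>The operator I_mu for a measure on [0,1)\<close>

locale unit_interval_measure =
  fixes M :: "real measure"
  assumes sets_M: "sets M = sets (restrict_space borel {0..<1})"
begin

lemma space_M: "space M = {0..<1}"
  using sets_eq_imp_space_eq[OF sets_M] by simp

lemma borel_measurable_continuous_on_M:
  "continuous_on {0..<1} h \<Longrightarrow> h \<in> borel_measurable M"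
  unfolding measurable_cong_sets[OF sets_M refl] by (rule borel_measurable_continuous_on_restrict)

lemma borel_measurable_ident_M [measurable]: "(\<lambda>t. t) \<in> borel_measurable M"
  by (rule borel_measurable_continuous_on_M) (rule continuous_on_id)

lemma integrable_restriction_Hinf:
  assumes v: "weight v" and iv: "integrable M (\<lambda>t. 1 / v (complex_of_real t))" and f: "f \<in> Hinf v"
  shows "integrable M (\<lambda>t. f (complex_of_real t))"
proof -
  obtain C where C: "\<forall>z\<in>ball 0 1. v z * norm (f z) \<le> C"
    using f by (auto simp: Hinf_def)
  have "continuous_on (ball 0 1) f"
    using f by (auto simp: Hinf_def holomorphic_on_imp_continuous_on)
  then have "(\<lambda>t. f (complex_of_real t)) \<in> borel_measurable M"
    by (intro borel_measurable_continuous_on_M continuous_on_compose2[OF _ continuous_on_of_real])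
      auto
  moreover have "norm (f (complex_of_real t)) \<le> norm (C * (1 / v (complex_of_real t)))"
    if "t \<in> space M" for t
  proof -
    have t: "complex_of_real t \<in> ball 0 1"
      using that by (simp add: space_M)
    have "norm (f (complex_of_real t)) \<le> C / v (complex_of_real t)"
      using C t by (intro norm_le_divide_weight[OF v t]) auto
    then show ?thesis
      using abs_ge_self[of "C / v (complex_of_real t)"] by simp
  qed
  ultimately show ?thesis
    by (intro Bochner_Integration.integrable_bound[OF integrable_mult_right[OF iv, of C]] AE_I2)
qed

context
  fixes f :: "complex \<Rightarrow> complex"
  assumes f: "integrable M (\<lambda>t. f (complex_of_real t))"
begin

lemma borel_measurable_restriction [measurable]: "(\<lambda>t. f (complex_of_real t)) \<in> borel_measurable M"
  using f by (rule borel_measurable_integrable)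

lemma integrable_kernel_majorant:
  assumes s: "0 \<le> s" "s < 1"
  shows "integrable M (\<lambda>t. norm (f (complex_of_real t)) / (1 - t * s))"
proof (rule Bochner_Integration.integrable_bound)
  show "integrable M (\<lambda>t. norm (f (complex_of_real t)) / (1 - s))"
    using f by simp
  show "(\<lambda>t. norm (f (complex_of_real t)) / (1 - t * s)) \<in> borel_measurable M"
    by measurable
  show "AE t in M. norm (norm (f (complex_of_real t)) / (1 - t * s))
      \<le> norm (norm (f (complex_of_real t)) / (1 - s))"
  proof (rule AE_I2)
    fix t assume "t \<in> space M"
    then have "1 - s \<le> 1 - t * s"
      using one_minus_le_one_minus_mult[of s t] s by (simp add: space_M)
    then show "norm (norm (f (complex_of_real t)) / (1 - t * s))
        \<le> norm (norm (f (complex_of_real t)) / (1 - s))"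
      using s by (auto intro!: divide_left_mono mult_pos_pos)
  qed
qed

lemma integrable_I_mu_kernel:
  assumes z: "norm z < 1"
  shows "integrable M (\<lambda>t. f (complex_of_real t) / (1 - complex_of_real t * z))"
proof (rule Bochner_Integration.integrable_bound[OF integrable_kernel_majorant])
  show "(\<lambda>t. f (complex_of_real t) / (1 - complex_of_real t * z)) \<in> borel_measurable M"
    by measurable
  show "AE t in M. norm (f (complex_of_real t) / (1 - complex_of_real t * z))
      \<le> norm (norm (f (complex_of_real t)) / (1 - t * norm z))"
  proof (rule AE_I2)
    fix t assume "t \<in> space M"
    then have "norm (f (complex_of_real t) / (1 - complex_of_real t * z))
        \<le> norm (f (complex_of_real t)) / (1 - t * norm z)"
      using norm_divide_one_minus_of_real_mult_le z by (simp add: space_M)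
    then show "norm (f (complex_of_real t) / (1 - complex_of_real t * z))
        \<le> norm (norm (f (complex_of_real t)) / (1 - t * norm z))"
      unfolding real_norm_def by linarith
  qed
qed (use z in auto)

lemma norm_I_mu_le:
  assumes z: "norm z < 1"
  shows "norm (I_mu M f z) \<le> (LINT t|M. norm (f (complex_of_real t)) / (1 - t * norm z))"
  unfolding I_mu_def
  using norm_divide_one_minus_of_real_mult_le z
  by (intro Bochner_Integration.integral_norm_bound_integral integrable_I_mu_kernel
      integrable_kernel_majorant) (auto simp: space_M)

lemma norm_I_mu_le_L1:
  assumes z: "norm z < 1"
  shows "(1 - norm z) * norm (I_mu M f z) \<le> (LINT t|M. norm (f (complex_of_real t)))"
proof -
  have "(LINT t|M. norm (f (complex_of_real t)) / (1 - t * norm z))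
      \<le> (LINT t|M. norm (f (complex_of_real t)) / (1 - norm z))"
  proof (rule integral_mono[OF integrable_kernel_majorant])
    fix t assume "t \<in> space M"
    then have "1 - norm z \<le> 1 - t * norm z"
      using one_minus_le_one_minus_mult[of "norm z" t] by (simp add: space_M)
    then show "norm (f (complex_of_real t)) / (1 - t * norm z)
        \<le> norm (f (complex_of_real t)) / (1 - norm z)"
      using z by (auto intro!: divide_left_mono mult_pos_pos)
  qed (use f z in auto)
  then have "(1 - norm z) * (LINT t|M. norm (f (complex_of_real t)) / (1 - t * norm z))
      \<le> (LINT t|M. norm (f (complex_of_real t)))"
    using z by (simp add: mult.commute pos_le_divide_eq)
  moreover have "(1 - norm z) * norm (I_mu M f z)
      \<le> (1 - norm z) * (LINT t|M. norm (f (complex_of_real t)) / (1 - t * norm z))"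
    using norm_I_mu_le[OF z] z by (intro mult_left_mono) auto
  ultimately show ?thesis
    by linarith
qed

lemma damped_majorant_tendsto_zero:
  assumes S: "\<And>i. 0 \<le> S i" "\<And>i. S i < 1" and "S \<longlonglongrightarrow> 1"
  shows "(\<lambda>i. LINT t|M. norm (f (complex_of_real t)) * ((1 - S i) / (1 - t * S i))) \<longlonglongrightarrow> 0"
proof -
  have "(\<lambda>i. LINT t|M. norm (f (complex_of_real t)) * ((1 - S i) / (1 - t * S i)))
      \<longlonglongrightarrow> (LINT t|M. 0)"
  proof (rule integral_dominated_convergence[where w = "\<lambda>t. norm (f (complex_of_real t))"])
    show "AE t in M. (\<lambda>i. norm (f (complex_of_real t)) * ((1 - S i) / (1 - t * S i))) \<longlonglongrightarrow> 0"
    proof (rule AE_I2)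
      fix t assume "t \<in> space M"
      then have "1 - t * 1 \<noteq> 0"
        by (simp add: space_M)
      then have "(\<lambda>i. norm (f (complex_of_real t)) * ((1 - S i) / (1 - t * S i)))
          \<longlonglongrightarrow> norm (f (complex_of_real t)) * ((1 - 1) / (1 - t * 1))"
        by (intro tendsto_intros \<open>S \<longlonglongrightarrow> 1\<close>)
      then show "(\<lambda>i. norm (f (complex_of_real t)) * ((1 - S i) / (1 - t * S i))) \<longlonglongrightarrow> 0"
        by simp
    qed
    show "AE t in M. norm (norm (f (complex_of_real t)) * ((1 - S i) / (1 - t * S i)))
        \<le> norm (f (complex_of_real t))" for i
    proof (rule AE_I2)
      fix t assume "t \<in> space M"
      then have t: "0 \<le> t" "t \<le> 1"
        by (auto simp: space_M)
      note damping = damping_factor_bounds[OF S(1,2)[of i] t]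
      show "norm (norm (f (complex_of_real t)) * ((1 - S i) / (1 - t * S i)))
          \<le> norm (f (complex_of_real t))"
        unfolding real_norm_def abs_mult abs_norm_cancel abs_of_nonneg[OF damping(1)]
        using damping(2) by (rule mult_left_le) simp
    qed
  qed (use f in auto)
  then show ?thesis
    by simp
qed

lemma kernel_majorant_tendsto_zero:
  "((\<lambda>s. (1 - s) * (LINT t|M. norm (f (complex_of_real t)) / (1 - t * s))) \<longlongrightarrow> 0)
    (at 1 within {0..<1})"
  unfolding tendsto_at_iff_sequentially comp_def
proof (intro allI impI)
  fix S :: "nat \<Rightarrow> real"
  assume "\<forall>i. S i \<in> {0..<1} - {1}" and "S \<longlonglongrightarrow> 1"
  then have "(\<lambda>i. LINT t|M. norm (f (complex_of_real t)) * ((1 - S i) / (1 - t * S i))) \<longlonglongrightarrow> 0"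
    by (intro damped_majorant_tendsto_zero) auto
  moreover have "(1 - S i) * (LINT t|M. norm (f (complex_of_real t)) / (1 - t * S i))
      = (LINT t|M. norm (f (complex_of_real t)) * ((1 - S i) / (1 - t * S i)))" for i
    by (simp add: integral_mult_right_zero[symmetric] field_simps)
  ultimately show "(\<lambda>i. (1 - S i) * (LINT t|M. norm (f (complex_of_real t)) / (1 - t * S i)))
      \<longlonglongrightarrow> 0"
    by simp
qed

lemma integrable_I_mu_deriv_kernel:
  assumes z: "norm z < 1"
  shows "integrable M (\<lambda>t. f (complex_of_real t) * complex_of_real t / (1 - complex_of_real t * z)^2)"
proof (rule Bochner_Integration.integrable_bound)
  show "integrable M (\<lambda>t. norm (f (complex_of_real t)) / (1 - norm z)^2)"
    using f by simp
  show "(\<lambda>t. f (complex_of_real t) * complex_of_real t / (1 - complex_of_real t * z)^2)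
      \<in> borel_measurable M"
    by measurable
  show "AE t in M. norm (f (complex_of_real t) * complex_of_real t / (1 - complex_of_real t * z)^2)
      \<le> norm (norm (f (complex_of_real t)) / (1 - norm z)^2)"
  proof (rule AE_I2)
    fix t assume "t \<in> space M"
    then have t: "0 \<le> t" "t \<le> 1"
      by (auto simp: space_M)
    have "norm (f (complex_of_real t) * complex_of_real t / (1 - complex_of_real t * z)^2)
        = norm (f (complex_of_real t)) * (t / norm (1 - complex_of_real t * z)^2)"
      using t by (simp add: norm_mult norm_divide norm_power)
    also have "\<dots> \<le> norm (f (complex_of_real t)) * (1 / (1 - norm z)^2)"
      using t z one_minus_norm_le_norm_one_minus_of_real_mult[OF t, of z]
      by (intro mult_left_mono frac_le power_mono) auto
    finally show "norm (f (complex_of_real t) * complex_of_real t / (1 - complex_of_real t * z)^2)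
        \<le> norm (norm (f (complex_of_real t)) / (1 - norm z)^2)"
      by simp
  qed
qed

lemma I_mu_difference_quotient:
  assumes z0: "norm z0 < 1" and z1: "norm z1 < 1" and ne: "z1 \<noteq> z0"
  shows "(I_mu M f z1 - I_mu M f z0) / (z1 - z0)
      - (LINT t|M. f (complex_of_real t) * complex_of_real t / (1 - complex_of_real t * z0)^2)
    = (LINT t|M. f (complex_of_real t) * (complex_of_real t)^2 * (z1 - z0)
        / ((1 - complex_of_real t * z1) * (1 - complex_of_real t * z0)^2))"
proof -
  have nonzero: "1 - complex_of_real t * z \<noteq> 0" if "t \<in> space M" "norm z < 1" for t z
    using one_minus_norm_le_norm_one_minus_of_real_mult[of t z] that by (auto simp: space_M)
  have "(I_mu M f z1 - I_mu M f z0) / (z1 - z0)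
      - (LINT t|M. f (complex_of_real t) * complex_of_real t / (1 - complex_of_real t * z0)^2)
    = (LINT t|M. (f (complex_of_real t) / (1 - complex_of_real t * z1)
        - f (complex_of_real t) / (1 - complex_of_real t * z0)) / (z1 - z0)
        - f (complex_of_real t) * complex_of_real t / (1 - complex_of_real t * z0)^2)"
    using integrable_I_mu_kernel[OF z0] integrable_I_mu_kernel[OF z1]
      integrable_I_mu_deriv_kernel[OF z0]
    by (simp add: I_mu_def)
  also have "\<dots> = (LINT t|M. f (complex_of_real t) * (complex_of_real t)^2 * (z1 - z0)
        / ((1 - complex_of_real t * z1) * (1 - complex_of_real t * z0)^2))"
    using kernel_difference_quotient nonzero z0 z1 ne
    by (intro Bochner_Integration.integral_cong) auto
  finally show ?thesis .
qed

lemma I_mu_difference_quotient_bound: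
  assumes z0: "norm z0 < 1" and z1: "norm z1 < 1" and ne: "z1 \<noteq> z0"
  shows "norm ((I_mu M f z1 - I_mu M f z0) / (z1 - z0)
      - (LINT t|M. f (complex_of_real t) * complex_of_real t / (1 - complex_of_real t * z0)^2))
    \<le> norm (z1 - z0) * (LINT t|M. norm (f (complex_of_real t))) / ((1 - norm z1) * (1 - norm z0)^2)"
proof -
  define E where "E t = f (complex_of_real t) * (complex_of_real t)^2 * (z1 - z0)
    / ((1 - complex_of_real t * z1) * (1 - complex_of_real t * z0)^2)" for t
  define c where "c = norm (z1 - z0) / ((1 - norm z1) * (1 - norm z0)^2)"
  have E_bound: "norm (E t) \<le> norm (f (complex_of_real t)) * c" if "t \<in> space M" for t
  proof -
    have t: "0 \<le> t" "t \<le> 1"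
      using that by (auto simp: space_M)
    have "norm (E t) = norm (f (complex_of_real t)) * (t^2 * norm (z1 - z0)
        / (norm (1 - complex_of_real t * z1) * norm (1 - complex_of_real t * z0)^2))"
      by (simp add: E_def norm_mult norm_divide norm_power)
    also have "\<dots> \<le> norm (f (complex_of_real t)) * c"
      unfolding c_def using t z0 z1 one_minus_norm_le_norm_one_minus_of_real_mult[OF t]
      by (intro mult_left_mono frac_le mult_mono power_mono)
        (auto simp: power_le_one mult_left_le_one_le)
    finally show ?thesis .
  qed
  have "integrable M E"
  proof (rule Bochner_Integration.integrable_bound)
    show "integrable M (\<lambda>t. norm (f (complex_of_real t)) * c)"
      using f by simp
    show "E \<in> borel_measurable M"
      unfolding E_def by measurable
    show "AE t in M. norm (E t) \<le> norm (norm (f (complex_of_real t)) * c)"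
      using E_bound order_trans[OF E_bound abs_ge_self] by (auto intro: AE_I2)
  qed
  then have "norm (integral\<^sup>L M E) \<le> (LINT t|M. norm (f (complex_of_real t)) * c)"
    using f E_bound by (intro Bochner_Integration.integral_norm_bound_integral) auto
  then show ?thesis
    unfolding I_mu_difference_quotient[OF z0 z1 ne] E_def[abs_def] c_def by (simp add: mult.commute)
qed

lemma I_mu_has_field_derivative:
  assumes z0: "norm z0 < 1"
  shows "(I_mu M f has_field_derivative
      (LINT t|M. f (complex_of_real t) * complex_of_real t / (1 - complex_of_real t * z0)^2)) (at z0)"
proof -
  define D where "D = (LINT t|M. f (complex_of_real t) * complex_of_real t / (1 - complex_of_real t * z0)^2)"
  define L where "L = (LINT t|M. norm (f (complex_of_real t)))"
  define \<rho> where "\<rho> = (1 + norm z0) / 2"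
  define c where "c = L / ((1 - \<rho>) * (1 - norm z0)^2)"
  have \<rho>: "norm z0 < \<rho>" "\<rho> < 1"
    using z0 by (auto simp: \<rho>_def)
  have "L \<ge> 0"
    unfolding L_def by simp
  have "\<forall>\<^sub>F z in at z0. norm ((I_mu M f z - I_mu M f z0) / (z - z0) - D) \<le> norm (z - z0) * c"
    unfolding eventually_at
  proof (intro exI[of _ "\<rho> - norm z0"] conjI ballI impI)
    fix z assume z: "z \<noteq> z0 \<and> dist z z0 < \<rho> - norm z0"
    then have "norm z < \<rho>"
      using norm_triangle_ineq2[of z z0] by (simp add: dist_norm)
    then have "norm (z - z0) * L / ((1 - norm z) * (1 - norm z0)^2) \<le> norm (z - z0) * c"
      unfolding c_def mult_divide_mult_cancel_left using \<rho> z0 \<open>L \<ge> 0\<close>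
      by (simp add: divide_left_mono mult_right_mono mult_pos_pos)
    with I_mu_difference_quotient_bound[OF z0, of z] z \<open>norm z < \<rho>\<close> \<rho>
    show "norm ((I_mu M f z - I_mu M f z0) / (z - z0) - D) \<le> norm (z - z0) * c"
      by (simp add: D_def L_def)
  qed (use \<rho> in simp)
  moreover have "((\<lambda>z. norm (z - z0) * c) \<longlongrightarrow> 0) (at z0)"
    by (auto intro!: tendsto_eq_intros simp: LIM_zero_iff)
  ultimately have "((\<lambda>z. (I_mu M f z - I_mu M f z0) / (z - z0) - D) \<longlongrightarrow> 0) (at z0)"
    by (rule Lim_null_comparison)
  then show ?thesis
    unfolding has_field_derivative_iff D_def[symmetric] by (rule LIM_zero_cancel)
qed

lemma I_mu_holomorphic: "I_mu M f holomorphic_on ball 0 1"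
  unfolding holomorphic_on_open[OF open_ball] using I_mu_has_field_derivative by (metis mem_ball_0)

lemma I_mu_in_H0:
  assumes w_le: "\<And>z. z \<in> ball 0 1 \<Longrightarrow> w z \<le> 1 - norm z"
  shows "I_mu M f \<in> H0 w"
proof -
  have w_I_mu_le: "w z * norm (I_mu M f z) \<le> (1 - norm z) * norm (I_mu M f z)"
    if "z \<in> ball 0 1" for z
    using w_le[OF that] by (rule mult_right_mono) simp
  have "I_mu M f \<in> Hinf w"
    unfolding Hinf_def using I_mu_holomorphic w_I_mu_le norm_I_mu_le_L1
    by (force intro: order_trans)
  moreover have "\<exists>r<1. \<forall>z\<in>ball 0 1. r < norm z \<longrightarrow> w z * norm (I_mu M f z) < e"
    if "e > 0" for e
  proof -
    obtain \<delta> where "\<delta> > 0" and \<delta>: "\<And>s. s \<in> {0..<1} \<Longrightarrow> s \<noteq> 1 \<Longrightarrow> dist s 1 < \<delta> \<Longrightarrow>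
        \<bar>(1 - s) * (LINT t|M. norm (f (complex_of_real t)) / (1 - t * s))\<bar> < e"
      using kernel_majorant_tendsto_zero \<open>e > 0\<close> by (force simp: tendsto_iff eventually_at)
    have "w z * norm (I_mu M f z) < e" if z: "z \<in> ball 0 1" "1 - \<delta> < norm z" for z
    proof -
      have "w z * norm (I_mu M f z)
          \<le> (1 - norm z) * (LINT t|M. norm (f (complex_of_real t)) / (1 - t * norm z))"
        using w_I_mu_le[OF z(1)] norm_I_mu_le[of z] z(1) by (auto intro: order_trans mult_left_mono)
      also have "\<dots> < e"
        using \<delta>[of "norm z"] z by (auto simp: dist_real_def)
      finally show ?thesis .
    qed
    with \<open>\<delta> > 0\<close> show ?thesis
      by (intro exI[of _ "1 - \<delta>"]) auto
  qed
  ultimately show ?thesis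
    unfolding H0_def by blast
qed

lemma wnorm_I_mu_le:
  assumes "\<And>z. z \<in> ball 0 1 \<Longrightarrow> w z \<le> 1 - norm z"
  shows "wnorm w (I_mu M f) \<le> (LINT t|M. norm (f (complex_of_real t)))"
proof (rule wnorm_least)
  fix z :: complex assume z: "z \<in> ball 0 1"
  have "w z * norm (I_mu M f z) \<le> (1 - norm z) * norm (I_mu M f z)"
    using assms[OF z] by (rule mult_right_mono) simp
  also have "\<dots> \<le> (LINT t|M. norm (f (complex_of_real t)))"
    using norm_I_mu_le_L1 z by simp
  finally show "w z * norm (I_mu M f z) \<le> (LINT t|M. norm (f (complex_of_real t)))" .
qed

end

lemma I_mu_diff:
  assumes f: "integrable M (\<lambda>t. f (complex_of_real t))" and g: "integrable M (\<lambda>t. g (complex_of_real t))"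
    and z: "norm z < 1"
  shows "I_mu M (\<lambda>z. f z - g z) z = I_mu M f z - I_mu M g z"
  unfolding I_mu_def diff_divide_distrib
  using integrable_I_mu_kernel[OF f z] integrable_I_mu_kernel[OF g z] by simp

lemma wnorm_I_mu_diff:
  assumes "integrable M (\<lambda>t. f (complex_of_real t))" "integrable M (\<lambda>t. g (complex_of_real t))"
  shows "wnorm w (\<lambda>z. I_mu M f z - I_mu M g z) = wnorm w (I_mu M (\<lambda>z. f z - g z))"
  unfolding wnorm_def using I_mu_diff[OF assms] by (intro SUP_cong) auto

context
  fixes v w :: "complex \<Rightarrow> real"
  assumes v: "weight v" and iv: "integrable M (\<lambda>t. 1 / v (complex_of_real t))"
    and w: "weight w" and w_le: "\<And>z. z \<in> ball 0 1 \<Longrightarrow> w z \<le> 1 - norm z"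
begin

lemma L1_tendsto_zero_of_weighted_bound:
  assumes meas: "\<And>n. (\<lambda>t. hs n (complex_of_real t)) \<in> borel_measurable M"
    and bound: "\<And>n z. z \<in> ball 0 1 \<Longrightarrow> v z * norm (hs n z) \<le> B"
    and lim: "\<And>z. z \<in> ball 0 1 \<Longrightarrow> (\<lambda>n. hs n z) \<longlonglongrightarrow> 0"
  shows "(\<lambda>n. LINT t|M. norm (hs n (complex_of_real t))) \<longlonglongrightarrow> 0"
proof -
  have "(\<lambda>n. LINT t|M. norm (hs n (complex_of_real t))) \<longlonglongrightarrow> (LINT t|M. 0)"
  proof (rule integral_dominated_convergence[where w = "\<lambda>t. B * (1 / v (complex_of_real t))"])
    show "AE t in M. (\<lambda>n. norm (hs n (complex_of_real t))) \<longlonglongrightarrow> 0"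
      using lim by (intro AE_I2 tendsto_norm_zero) (simp add: space_M)
    show "AE t in M. norm (norm (hs n (complex_of_real t))) \<le> B * (1 / v (complex_of_real t))" for n
    proof (rule AE_I2)
      fix t assume "t \<in> space M"
      then have t: "complex_of_real t \<in> ball 0 1"
        by (simp add: space_M)
      show "norm (norm (hs n (complex_of_real t))) \<le> B * (1 / v (complex_of_real t))"
        using norm_le_divide_weight[of v _ "hs n", OF v t bound[OF t]] by simp
    qed
  qed (use meas integrable_mult_right[OF iv, of B] in auto)
  then show ?thesis
    by simp
qed

lemma I_mu_well_defined: "I_mu_well_defined M v w"
  unfolding I_mu_well_defined_def
  using integrable_I_mu_kernel I_mu_in_H0[OF _ w_le] integrable_restriction_Hinf[OF v iv] by auto

lemma I_mu_compact: "I_mu_compact M v w"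
  unfolding I_mu_compact_def
proof (intro allI impI)
  fix fs :: "nat \<Rightarrow> complex \<Rightarrow> complex"
  assume "(\<forall>n. fs n \<in> Hinf v) \<and> (\<exists>C. \<forall>n. wnorm v (fs n) \<le> C)"
  then obtain C where fs: "\<And>n. fs n \<in> Hinf v" and C: "\<And>n. wnorm v (fs n) \<le> C"
    by blast
  have fs_bound: "v z * norm (fs n z) \<le> C" if "z \<in> ball 0 1" for n z
    using wnorm_upper[OF fs[of n] that] C[of n] by linarith
  have fs_hol: "fs n holomorphic_on ball 0 1" for n
    using fs[of n] by (simp add: Hinf_def)
  obtain r g where r: "strict_mono r" and g: "g \<in> Hinf v"
    and g_bound: "\<And>z. z \<in> ball 0 1 \<Longrightarrow> v z * norm (g z) \<le> C"
    and g_lim: "\<And>z. z \<in> ball 0 1 \<Longrightarrow> (\<lambda>n. fs (r n) z) \<longlonglongrightarrow> g z"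
    using weighted_bounded_seq_has_convergent_subseq[of v fs C, OF v fs_hol fs_bound] by blast
  define h where "h n z = fs (r n) z - g z" for n z
  have h_int: "integrable M (\<lambda>t. h n (complex_of_real t))" for n
    unfolding h_def by (intro integrable_restriction_Hinf[OF v iv] Hinf_diff[OF v fs g])
  have h_bound: "v z * norm (h n z) \<le> 2 * C" if z: "z \<in> ball 0 1" for n z
    using weighted_norm_diff_le[OF v z, of "fs (r n)" g] fs_bound[OF z, of "r n"] g_bound[OF z]
    unfolding h_def by linarith
  have h_L1: "(\<lambda>n. LINT t|M. norm (h n (complex_of_real t))) \<longlonglongrightarrow> 0"
    using h_int h_bound g_lim
    by (intro L1_tendsto_zero_of_weighted_bound) (auto simp: h_def LIM_zero)
  have I_mu_h: "wnorm w (\<lambda>z. I_mu M (fs (r n)) z - I_mu M g z) = wnorm w (I_mu M (h n))" for n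
    unfolding h_def
    by (intro wnorm_I_mu_diff integrable_restriction_Hinf[OF v iv] fs g)
  have "0 \<le> wnorm w (I_mu M (h n))" for n
    using I_mu_in_H0[OF h_int w_le] by (intro wnorm_nonneg[OF w]) (simp add: H0_def)
  moreover have "wnorm w (I_mu M (h n)) \<le> (LINT t|M. norm (h n (complex_of_real t)))" for n
    by (rule wnorm_I_mu_le[OF h_int w_le])
  ultimately have "(\<lambda>n. wnorm w (\<lambda>z. I_mu M (fs (r n)) z - I_mu M g z)) \<longlonglongrightarrow> 0"
    unfolding I_mu_h by (intro tendsto_sandwich[OF _ _ tendsto_const h_L1]) auto
  moreover have "I_mu M g \<in> H0 w"
    by (rule I_mu_in_H0[OF integrable_restriction_Hinf[OF v iv g] w_le])
  ultimately show "\<exists>r g. strict_mono r \<and> g \<in> H0 w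
      \<and> (\<lambda>n. wnorm w (\<lambda>z. I_mu M (fs (r n)) z - g z)) \<longlonglongrightarrow> 0"
    using r by blast
qed

end

end

theorem corollary13:
  fixes M :: "real measure" and v w :: "complex \<Rightarrow> real"
  assumes "finite_measure M"
    and "space M = {0..<1}"
    and "sets M = sets (restrict_space borel {0..<1::real})"
    and "weight v" and "weight w"
    and "integrable M (\<lambda>t. 1 / v (complex_of_real t))"
    and "\<forall>r::real. 0 < r \<and> r < 1 \<longrightarrow> w (complex_of_real r) \<le> 1 - r"
  shows "I_mu_well_defined M v w \<and> I_mu_compact M v w"
proof -
  \<comment> \<open>Finiteness of M and the description of its space are not needed: the former follows
    from the integrability of 1/v \<ge> 1/v(0), the latter from the description of its sets.\<close>
  interpret unit_interval_measure M
    using assms(3) by unfold_locales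
  have "\<And>z. z \<in> ball 0 1 \<Longrightarrow> w z \<le> 1 - norm z"
    using weight_le_one_minus_norm[OF assms(5,7)] .
  with assms(4-6) show ?thesis
    using I_mu_well_defined I_mu_compact by blast
qed

end
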